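(* Let $N\ge 1$ and $\nu\in\mathbb S_N$. For $k\in\mathbb Z$ put $F_k(\nu):=\mathrm{Dim}_{1,N}(k,\nu)/\mathrm{Dim}_N\nu$, and set $$H^*(t;\nu)=\prod_{j=1}^N\frac{t+j}{t+j-\nu_j},$$ where $t$ is a formal variable. Then the following identity of rational functions of $t$ holds: $$H^*(t;\nu)=\sum_{k\in\mathbb Z}F_k(\nu)\,\frac{(t+1)(t+2)\cdots(t+N)}{(t+1-k)(t+2-k)\cdots(t+N-k)}.$$ The sum is finite, because $F_k(\nu)=0$ unless $\nu_N\le k\le\nu_1$.
   Context: For $N\ge1$, a signature of length $N$ is an $N$-tuple of integers $\nu=(\nu_1\ge\nu_2\ge\dots\ge\nu_N)$, and $\mathbb S_N\subset\mathbb Z^N$ denotes the set of all of them; in particular $\mathbb S_1=\mathbb Z$. For $\nu\in\mathbb S_N$ and $\lambda\in\mathbb S_{N-1}$ write $\lambda\prec\nu$ (the two signatures are interlaced) if $\nu_i\ge\lambda_i\ge\nu_{i+1}$ for $i=1,\dots,N-1$. Weyl's dimension is $\mathrm{Dim}_N\nu=\prod_{1\le i<j\le N}\frac{\nu_i-\nu_j-i+j}{j-i}$. For $K<N$, $\kappa\in\mathbb S_K$ and $\nu\in\mathbb S_N$, $\mathrm{Dim}_{K,N}(\kappa,\nu)$ is the number of chains $\kappa=\lambda^{(K)}\prec\lambda^{(K+1)}\prec\dots\prec\lambda^{(N)}=\nu$ with $\lambda^{(j)}\in\mathbb S_j$. *)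

theory Defs
  imports "HOL-Computational_Algebra.Polynomial" "HOL-Computational_Algebra.Fraction_Field"
begin

text \<open>Signatures of length N are represented as int lists of length N (0-indexed:
  nu ! (i-1) is the paper's nu_i).\<close>

definition sig :: "nat \<Rightarrow> int list set" where
  "sig N = {nu. length nu = N \<and> (\<forall>i. i + 1 < N \<longrightarrow> nu ! i \<ge> nu ! (i + 1))}"

definition interlaced :: "int list \<Rightarrow> int list \<Rightarrow> bool" where
  "interlaced lam nu \<longleftrightarrow> length nu = length lam + 1 \<and>
     (\<forall>i < length lam. nu ! i \<ge> lam ! i \<and> lam ! i \<ge> nu ! (i + 1))"

definition DimW :: "nat \<Rightarrow> int list \<Rightarrow> rat" where
  "DimW N nu = (\<Prod>(i, j) \<in> {(i, j). i < j \<and> j < N}.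
       of_int (nu ! i - nu ! j - int i + int j) / of_int (int j - int i))"

text \<open>Number of chains kappa = lam(K) < lam(K+1) < ... < lam(N) = nu, lam(j) in S_j.
  The chain is the list ls with ls ! m = lam(K+m).\<close>
definition DimKN :: "nat \<Rightarrow> nat \<Rightarrow> int list \<Rightarrow> int list \<Rightarrow> nat" where
  "DimKN K N kappa nu = card {ls. length ls = N - K + 1 \<and> ls ! 0 = kappa \<and> ls ! (N - K) = nu
      \<and> (\<forall>m \<le> N - K. ls ! m \<in> sig (K + m))
      \<and> (\<forall>m < N - K. interlaced (ls ! m) (ls ! (m + 1)))}"

definition Fk :: "nat \<Rightarrow> int list \<Rightarrow> int \<Rightarrow> rat" where
  "Fk N nu k = of_nat (DimKN 1 N [k] nu) / DimW N nu"

definition Hstar :: "nat \<Rightarrow> int list \<Rightarrow> rat poly fract" where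
  "Hstar N nu = (\<Prod>j\<in>{1..N}. Fract [:of_nat j, 1:] [:of_nat j - of_int (nu ! (j - 1)), 1:])"

definition shift_ratio :: "nat \<Rightarrow> int \<Rightarrow> rat poly fract" where
  "shift_ratio N k = Fract (\<Prod>j\<in>{1..N}. [:of_nat j, 1:]) (\<Prod>j\<in>{1..N}. [:of_nat j - of_int k, 1:])"

end

theory Submission
  imports
    Defs
    "HOL-Library.FuncSet"
    "HOL-Computational_Algebra.Polynomial_Factorial"
    "Jordan_Normal_Form.Determinant"
begin

text \<open>
  Write l_j = nu_j - j. The branching rule expresses Dim_{1,N}(k, nu) as the sum of
  Dim_{1,N-1}(k, lam) over the box of signatures lam interlacing nu. For M <= N consider the
  M x M matrix whose row j holds the binomials (l_j + i choose i), i < M - 1, followed by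
  r! / ((t - l_j) ... (t - l_j + r)) with r = N - M. Its determinant is multilinear in the rows,
  and summing a row over its interval telescopes every entry to a difference of two consecutive
  rows of the (M + 1) x (M + 1) matrix of nu, whose leading column of ones then eliminates.
  By induction from M = 1, the sum over k of Dim_{1,N}(k, nu) (N - 1)! / ((t + 1 - k) ... (t + N - k))
  is, up to sign, the determinant for M = N. Multiplying its row j by t - l_j leaves polynomials
  in l_j of degree < N, so it is a constant times the Vandermonde product of the l_j divided by
  prod_j (t - l_j), i.e. a constant times Dim_N nu H*(t; nu) / (t + 1) ... (t + N). Hence the
  right-hand side of the theorem is kappa_N H*(t; nu) with kappa_N depending only on N, and the
  zero signature shows kappa_N = 1.
\<close>

section \<open>Gelfand--Tsetlin chains\<close>

definition gt_chains :: "nat \<Rightarrow> int \<Rightarrow> int list \<Rightarrow> int list list set" where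
  "gt_chains M k nu = {ls. length ls = M \<and> ls ! 0 = [k] \<and> ls ! (M - 1) = nu
      \<and> (\<forall>m < M. ls ! m \<in> sig (Suc m))
      \<and> (\<forall>m. Suc m < M \<longrightarrow> interlaced (ls ! m) (ls ! Suc m))}"

lemma DimKN_eq_card_gt_chains:
  assumes "M \<ge> 1"
  shows "DimKN 1 M [k] nu = card (gt_chains M k nu)"
  unfolding DimKN_def gt_chains_def
  by (rule arg_cong[where f = card], rule Collect_cong) (use assms in \<open>auto simp: le_less_Suc_eq\<close>)

lemma gt_chains_1: "gt_chains 1 k nu = (if nu = [k] then {[[k]]} else {})"
  by (auto simp: gt_chains_def sig_def length_Suc_conv)

lemma sig_if_interlaced:
  assumes "nu \<in> sig (Suc m)" and "interlaced lam nu"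
  shows "lam \<in> sig m"
proof -
  have len: "length lam = m"
    using assms by (simp add: sig_def interlaced_def)
  have "lam ! Suc i \<le> lam ! i" if "Suc i < m" for i
  proof -
    have "lam ! Suc i \<le> nu ! Suc i" and "nu ! Suc i \<le> lam ! i"
      using assms(2) that len by (simp_all add: interlaced_def)
    then show ?thesis by linarith
  qed
  then show ?thesis
    using len by (simp add: sig_def)
qed

lemma sig_nth_Suc_le: "nu \<in> sig N \<Longrightarrow> Suc j < N \<Longrightarrow> nu ! Suc j \<le> nu ! j"
  by (simp add: sig_def)

lemma interlaced_bounds:
  assumes "interlaced lam nu" and "length nu = Suc n" and "n \<ge> 1"
  shows "nu ! n \<le> lam ! (n - 1)" and "lam ! 0 \<le> nu ! 0"
proof -
  have "length lam = n"
    using assms by (simp add: interlaced_def)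
  then have "nu ! Suc i \<le> lam ! i \<and> lam ! i \<le> nu ! i" if "i < n" for i
    using assms(1) that by (simp add: interlaced_def)
  from this[of "n - 1"] this[of 0] assms(3) show "nu ! n \<le> lam ! (n - 1)" and "lam ! 0 \<le> nu ! 0"
    by simp_all
qed

lemma interlaced_bij_PiE:
  assumes len: "length nu = Suc m"
  shows "bij_betw (\<lambda>lam. restrict ((!) lam) {..<m}) {lam. interlaced lam nu}
           (PiE {..<m} (\<lambda>j. {nu ! Suc j..nu ! j}))"
proof (rule bij_betw_byWitness[where f' = "\<lambda>g. map g [0..<m]"])
  show "\<forall>lam\<in>{lam. interlaced lam nu}. map (restrict ((!) lam) {..<m}) [0..<m] = lam"
  proof
    fix lam assume "lam \<in> {lam. interlaced lam nu}"
    then have "length lam = m"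
      using len by (simp add: interlaced_def)
    then show "map (restrict ((!) lam) {..<m}) [0..<m] = lam"
      by (intro nth_equalityI) simp_all
  qed
  show "\<forall>g\<in>PiE {..<m} (\<lambda>j. {nu ! Suc j..nu ! j}). restrict ((!) (map g [0..<m])) {..<m} = g"
  proof
    fix g assume g: "g \<in> PiE {..<m} (\<lambda>j. {nu ! Suc j..nu ! j})"
    show "restrict ((!) (map g [0..<m])) {..<m} = g"
    proof
      fix j
      show "restrict ((!) (map g [0..<m])) {..<m} j = g j"
        using PiE_arb[OF g, of j] by (cases "j < m") simp_all
    qed
  qed
  show "(\<lambda>lam. restrict ((!) lam) {..<m}) ` {lam. interlaced lam nu}
      \<subseteq> PiE {..<m} (\<lambda>j. {nu ! Suc j..nu ! j})"
  proof (intro subsetI, elim imageE)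
    fix g lam assume lam: "lam \<in> {lam. interlaced lam nu}" and g: "g = restrict ((!) lam) {..<m}"
    have "lam ! j \<in> {nu ! Suc j..nu ! j}" if "j < m" for j
      using lam len that by (simp add: interlaced_def)
    then show "g \<in> PiE {..<m} (\<lambda>j. {nu ! Suc j..nu ! j})"
      by (simp add: g restrict_PiE_iff)
  qed
  show "(\<lambda>g. map g [0..<m]) ` PiE {..<m} (\<lambda>j. {nu ! Suc j..nu ! j}) \<subseteq> {lam. interlaced lam nu}"
  proof (intro subsetI, elim imageE)
    fix lam g assume g: "g \<in> PiE {..<m} (\<lambda>j. {nu ! Suc j..nu ! j})" and lam: "lam = map g [0..<m]"
    have "g j \<in> {nu ! Suc j..nu ! j}" if "j < m" for j
      using PiE_mem[OF g] that by simp
    then show "lam \<in> {lam. interlaced lam nu}"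
      using len by (simp add: lam interlaced_def)
  qed
qed

lemma finite_interlaced: "finite {lam. interlaced lam nu}"
proof (cases "nu = []")
  case True
  then show ?thesis by (simp add: interlaced_def)
next
  case False
  then obtain m where m: "length nu = Suc m"
    by (cases nu) auto
  have "finite (PiE {..<m} (\<lambda>j. {nu ! Suc j..nu ! j}))"
    by (intro finite_PiE) simp_all
  then show ?thesis
    using bij_betw_finite[OF interlaced_bij_PiE[OF m]] by simp
qed

lemma gt_chains_Suc:
  assumes m: "m \<ge> 1" and nu: "nu \<in> sig (Suc m)"
  shows "gt_chains (Suc m) k nu = (\<Union>lam \<in> {lam. interlaced lam nu}. (\<lambda>ls. ls @ [nu]) ` gt_chains m k lam)"
proof (intro equalityI subsetI)
  fix ls assume ls: "ls \<in> gt_chains (Suc m) k nu"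
  then have len: "length ls = Suc m" and top: "ls ! m = nu"
    by (simp_all add: gt_chains_def)
  have "ls = butlast ls @ [nu]"
    using len top by (metis append_butlast_last_id diff_Suc_1 last_conv_nth list.size(3) nat.distinct(1))
  moreover have "interlaced (ls ! (m - 1)) nu"
    using ls m top by (auto simp: gt_chains_def dest: spec[of _ "m - 1"])
  moreover have "butlast ls \<in> gt_chains m k (ls ! (m - 1))"
    using ls m len by (simp add: gt_chains_def nth_butlast)
  ultimately show "ls \<in> (\<Union>lam \<in> {lam. interlaced lam nu}. (\<lambda>ls. ls @ [nu]) ` gt_chains m k lam)"
    by blast
next
  fix ls assume "ls \<in> (\<Union>lam \<in> {lam. interlaced lam nu}. (\<lambda>ls. ls @ [nu]) ` gt_chains m k lam)"
  then obtain lam ls' where lam: "interlaced lam nu" and ls': "ls' \<in> gt_chains m k lam"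
    and ls: "ls = ls' @ [nu]"
    by blast
  have len': "length ls' = m"
    using ls' by (simp add: gt_chains_def)
  have "ls ! i \<in> sig (Suc i)" if "i < Suc m" for i
  proof (cases "i < m")
    case True
    then show ?thesis using ls' len' by (simp add: ls gt_chains_def nth_append)
  next
    case False
    then have "i = m" using that by simp
    then show ?thesis using nu len' by (simp add: ls nth_append)
  qed
  moreover have "interlaced (ls ! i) (ls ! Suc i)" if "Suc i < Suc m" for i
  proof (cases "Suc i < m")
    case True
    then show ?thesis using ls' len' by (simp add: ls gt_chains_def nth_append)
  next
    case False
    then have "i = m - 1" "Suc i = m" using that by simp_all
    then show ?thesis using ls' len' lam by (simp add: ls gt_chains_def nth_append)
  qed
  ultimately show "ls \<in> gt_chains (Suc m) k nu"
    using ls' len' m by (simp add: ls gt_chains_def nth_append)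
qed

lemma finite_gt_chains:
  assumes "M \<ge> 1"
  shows "finite (gt_chains M k nu)"
  using assms
proof (induction M arbitrary: nu rule: nat_induct_at_least)
  case base
  show ?case using gt_chains_1[of k nu] by simp
next
  case (Suc m)
  show ?case
  proof (cases "nu \<in> sig (Suc m)")
    case True
    then show ?thesis
      using Suc finite_interlaced by (simp add: gt_chains_Suc)
  next
    case False
    then have "gt_chains (Suc m) k nu = {}"
      by (auto simp: gt_chains_def)
    then show ?thesis by simp
  qed
qed

lemma card_gt_chains_Suc:
  assumes m: "m \<ge> 1" and nu: "nu \<in> sig (Suc m)"
  shows "card (gt_chains (Suc m) k nu) = (\<Sum>lam | interlaced lam nu. card (gt_chains m k lam))"
proof -
  have "card (gt_chains (Suc m) k nu) = (\<Sum>lam | interlaced lam nu. card ((\<lambda>ls. ls @ [nu]) ` gt_chains m k lam))"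
    unfolding gt_chains_Suc[OF assms]
  proof (rule card_UN_disjoint)
    show "finite {lam. interlaced lam nu}"
      by (rule finite_interlaced)
    show "\<forall>lam\<in>{lam. interlaced lam nu}. finite ((\<lambda>ls. ls @ [nu]) ` gt_chains m k lam)"
      using finite_gt_chains[OF m] by simp
  qed (auto simp: gt_chains_def)
  also have "\<dots> = (\<Sum>lam | interlaced lam nu. card (gt_chains m k lam))"
    by (intro sum.cong refl card_image) (simp add: inj_on_def)
  finally show ?thesis .
qed

lemma DimKN_1: "DimKN 1 1 [k] nu = (if nu = [k] then 1 else 0)"
proof -
  have "DimKN 1 1 [k] nu = card (gt_chains 1 k nu)"
    by (rule DimKN_eq_card_gt_chains) simp
  then show ?thesis
    unfolding gt_chains_1 by simp
qed

lemma DimKN_branching: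
  assumes "m \<ge> 1" and "nu \<in> sig (Suc m)"
  shows "DimKN 1 (Suc m) [k] nu = (\<Sum>lam | interlaced lam nu. DimKN 1 m [k] lam)"
  using card_gt_chains_Suc[OF assms] DimKN_eq_card_gt_chains[of "Suc m"]
    DimKN_eq_card_gt_chains[OF assms(1)] by simp

lemma DimKN_support:
  assumes "M \<ge> 1" and "nu \<in> sig M" and "DimKN 1 M [k] nu \<noteq> 0"
  shows "nu ! (M - 1) \<le> k \<and> k \<le> nu ! 0"
  using assms
proof (induction M arbitrary: nu rule: nat_induct_at_least)
  case base
  then show ?case
    using DimKN_1[of k nu] by (simp split: if_splits)
next
  case (Suc n)
  then have "(\<Sum>lam | interlaced lam nu. DimKN 1 n [k] lam) \<noteq> 0"
    using DimKN_branching[OF Suc.hyps Suc.prems(1), of k] Suc.prems(2) by simp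
  then obtain lam where "lam \<in> {lam. interlaced lam nu}" and nz: "DimKN 1 n [k] lam \<noteq> 0"
    by (rule sum.not_neutral_contains_not_neutral)
  then have lam: "interlaced lam nu" by simp
  have "lam ! (n - 1) \<le> k \<and> k \<le> lam ! 0"
    using Suc.IH[OF sig_if_interlaced[OF Suc.prems(1) lam] nz] .
  moreover have "length nu = Suc n"
    using Suc.prems(1) by (simp add: sig_def)
  then have "nu ! n \<le> lam ! (n - 1)" and "lam ! 0 \<le> nu ! 0"
    using interlaced_bounds[OF lam _ Suc.hyps] by simp_all
  ultimately show ?case by simp
qed

lemma interlaced_zero:
  assumes len: "length nu = Suc n" and zero: "\<forall>i<Suc n. nu ! i = 0"
  shows "{lam. interlaced lam nu} = {replicate n 0}"
proof (intro equalityI subsetI)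
  fix lam assume "lam \<in> {lam. interlaced lam nu}"
  then have lam: "interlaced lam nu" by simp
  then have len_lam: "length lam = n"
    using len by (simp add: interlaced_def)
  have "lam ! i = 0" if "i < n" for i
  proof -
    have "nu ! Suc i \<le> lam ! i" "lam ! i \<le> nu ! i"
      using lam len_lam that by (simp_all add: interlaced_def)
    then show ?thesis using zero that by simp
  qed
  then show "lam \<in> {replicate n 0}"
    using len_lam by (simp add: list_eq_iff_nth_eq)
qed (use len zero in \<open>simp add: interlaced_def\<close>)

lemma DimKN_replicate_0:
  assumes "M \<ge> 1"
  shows "DimKN 1 M [0] (replicate M 0) = 1"
  using assms
proof (induction M rule: nat_induct_at_least)
  case base
  show ?case using DimKN_1[of 0 "[0]"] by simp
next
  case (Suc n)
  let ?z = "replicate (Suc n) (0 :: int)"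
  have sig: "?z \<in> sig (Suc n)"
    by (simp add: sig_def del: replicate_Suc)
  have "{lam. interlaced lam ?z} = {replicate n 0}"
    by (rule interlaced_zero) (simp_all del: replicate_Suc)
  then show ?case
    using DimKN_branching[OF Suc.hyps sig, of 0] Suc.IH by simp
qed

section \<open>Determinants\<close>

lemma det_mat:
  "det (mat n n f) = (\<Sum>p | p permutes {..<n}. signof p * (\<Prod>j<n. f (j, p j)))"
  by (subst det_def'[of _ n]) (auto simp: lessThan_atLeast0 intro!: sum.cong prod.cong
      simp: permutes_in_image[of _ "{0..<n}"])

lemma det_sum_rows:
  fixes F :: "nat \<Rightarrow> 'b \<Rightarrow> nat \<Rightarrow> 'a :: comm_ring_1"
  assumes "\<And>j. j < n \<Longrightarrow> finite (S j)"
  shows "det (mat n n (\<lambda>(j, i). \<Sum>x\<in>S j. F j x i)) =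
    (\<Sum>g\<in>PiE {..<n} S. det (mat n n (\<lambda>(j, i). F j (g j) i)))"
proof -
  have "(\<Prod>j<n. \<Sum>x\<in>S j. F j x (p j)) = (\<Sum>g\<in>PiE {..<n} S. \<Prod>j<n. F j (g j) (p j))" for p
    by (rule prod_sum_PiE) (simp_all add: assms)
  then show ?thesis
    unfolding det_mat by (simp add: sum_distrib_left sum.swap[where B = "PiE {..<n} S"])
qed

lemma det_scale_rows:
  fixes a :: "nat \<Rightarrow> 'a :: comm_ring_1"
  shows "det (mat n n (\<lambda>(j, i). a j * f j i)) = (\<Prod>j<n. a j) * det (mat n n (\<lambda>(j, i). f j i))"
  unfolding det_mat by (simp add: prod.distrib sum_distrib_left mult_ac)

definition upper_bidiag :: "nat \<Rightarrow> 'a :: comm_ring_1 \<Rightarrow> 'a mat" where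
  "upper_bidiag n a = mat n n (\<lambda>(i, j). if i = j then 1 else if j = Suc i then a else 0)"

lemma upper_bidiag_carrier [simp]: "upper_bidiag n a \<in> carrier_mat n n"
  by (simp add: upper_bidiag_def)

lemma dim_upper_bidiag [simp]:
  "dim_row (upper_bidiag n a) = n" "dim_col (upper_bidiag n a) = n"
  by (simp_all add: upper_bidiag_def)

lemma det_upper_bidiag [simp]: "det (upper_bidiag n a) = 1"
proof -
  have "det (upper_bidiag n a) = prod_list (diag_mat (upper_bidiag n a))"
    by (rule det_upper_triangular) (auto simp: upper_bidiag_def upper_triangular_def)
  also have "\<dots> = 1"
    unfolding prod_list_diag_prod by (simp add: upper_bidiag_def)
  finally show ?thesis .
qed

lemma upper_bidiag_mult_index:
  assumes C: "C \<in> carrier_mat n m" and j: "j < n" and k: "k < m"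
  shows "(upper_bidiag n a * C) $$ (j, k) = C $$ (j, k) + (if Suc j < n then a * C $$ (Suc j, k) else 0)"
proof -
  have "(upper_bidiag n a * C) $$ (j, k) = (\<Sum>r<n. upper_bidiag n a $$ (j, r) * C $$ (r, k))"
    using C j k by (simp add: scalar_prod_def lessThan_atLeast0)
  also have "\<dots> = (\<Sum>r<n. (if r = j then C $$ (j, k) else 0) + (if r = Suc j then a * C $$ (Suc j, k) else 0))"
    using j by (intro sum.cong refl) (auto simp: upper_bidiag_def)
  also have "\<dots> = C $$ (j, k) + (if Suc j < n then a * C $$ (Suc j, k) else 0)"
    using j by (simp add: sum.distrib)
  finally show ?thesis .
qed

lemma mult_upper_bidiag_index:
  assumes C: "C \<in> carrier_mat m n" and j: "j < m" and k: "k < n"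
  shows "(C * upper_bidiag n a) $$ (j, k) = C $$ (j, k) + (if k = 0 then 0 else a * C $$ (j, k - 1))"
proof -
  have "(C * upper_bidiag n a) $$ (j, k) = (\<Sum>r<n. C $$ (j, r) * upper_bidiag n a $$ (r, k))"
    using C j k by (simp add: scalar_prod_def lessThan_atLeast0)
  also have "\<dots> = (\<Sum>r<n. (if r = k then C $$ (j, k) else 0) + (if Suc r = k then a * C $$ (j, k - 1) else 0))"
    using k by (intro sum.cong refl) (auto simp: upper_bidiag_def)
  also have "\<dots> = C $$ (j, k) + (if k = 0 then 0 else a * C $$ (j, k - 1))"
    using k by (cases k) (simp_all add: sum.distrib)
  finally show ?thesis .
qed

lemma det_first_col_ones:
  assumes C: "C \<in> carrier_mat (Suc m) (Suc m)" and ones: "\<And>j. j < Suc m \<Longrightarrow> C $$ (j, 0) = 1"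
  shows "det C = (-1) ^ m * det (mat m m (\<lambda>(j, i). C $$ (j, Suc i) - C $$ (Suc j, Suc i)))"
proof -
  define D where "D = upper_bidiag (Suc m) (-1) * C"
  have D: "D \<in> carrier_mat (Suc m) (Suc m)"
    unfolding D_def by (rule mult_carrier_mat[OF upper_bidiag_carrier C])
  have D_index: "D $$ (j, k) = C $$ (j, k) - (if j < m then C $$ (Suc j, k) else 0)"
    if "j < Suc m" "k < Suc m" for j k
    using upper_bidiag_mult_index[OF C that] by (simp add: D_def)
  have "det C = det D"
    using det_mult[OF upper_bidiag_carrier C] by (simp add: D_def)
  also have "\<dots> = (\<Sum>j<Suc m. D $$ (j, 0) * cofactor D j 0)"
    by (rule laplace_expansion_column[OF D]) simp
  also have "\<dots> = (\<Sum>j<Suc m. if j = m then cofactor D j 0 else 0)"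
    by (intro sum.cong refl) (simp add: D_index ones)
  also have "\<dots> = (-1) ^ m * det (mat_delete D m 0)"
    by (simp add: cofactor_def)
  also have "mat_delete D m 0 = mat m m (\<lambda>(j, i). C $$ (j, Suc i) - C $$ (Suc j, Suc i))"
    by (rule eq_matI) (use D in \<open>simp_all add: mat_delete_def D_index\<close>)
  finally show ?thesis .
qed

lemma det_vandermonde:
  fixes x :: "nat \<Rightarrow> 'a :: comm_ring_1"
  shows "det (mat n n (\<lambda>(j, i). x j ^ i)) = (\<Prod>i<n. \<Prod>j\<in>{i<..<n}. x j - x i)"
proof (induction n arbitrary: x)
  case 0
  then show ?case by (simp add: det_def)
next
  case (Suc n)
  let ?V = "mat (Suc n) (Suc n) (\<lambda>(j, i). x j ^ i)"
  define W where "W = ?V * upper_bidiag (Suc n) (- x 0)"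
  have W: "W \<in> carrier_mat (Suc n) (Suc n)"
    unfolding W_def by (rule mult_carrier_mat[OF _ upper_bidiag_carrier]) simp
  have W_index: "W $$ (j, k) = (if k = 0 then 1 else (x j - x 0) * x j ^ (k - 1))"
    if "j < Suc n" "k < Suc n" for j k
    using mult_upper_bidiag_index[of ?V "Suc n" "Suc n" j k "- x 0"] that
    by (cases k) (simp_all add: W_def algebra_simps)
  have "det ?V = det W"
    using det_mult[of ?V "Suc n" "upper_bidiag (Suc n) (- x 0)"] by (simp add: W_def)
  also have "\<dots> = (\<Sum>k<Suc n. W $$ (0, k) * cofactor W 0 k)"
    by (rule laplace_expansion_row[OF W]) simp
  also have "\<dots> = (\<Sum>k<Suc n. if k = 0 then cofactor W 0 k else 0)"
    by (intro sum.cong refl) (simp add: W_index)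
  also have "\<dots> = det (mat_delete W 0 0)"
    by (simp add: cofactor_def)
  also have "mat_delete W 0 0 = mat n n (\<lambda>(j, i). (x (Suc j) - x 0) * x (Suc j) ^ i)"
    by (rule eq_matI) (use W in \<open>simp_all add: mat_delete_def W_index\<close>)
  also have "det \<dots> = (\<Prod>j<n. x (Suc j) - x 0) * (\<Prod>i<n. \<Prod>j\<in>{i<..<n}. x (Suc j) - x (Suc i))"
    using det_scale_rows[of n "\<lambda>j. x (Suc j) - x 0"] Suc.IH[of "\<lambda>j. x (Suc j)"] by simp
  also have "\<dots> = (\<Prod>i<Suc n. \<Prod>j\<in>{i<..<Suc n}. x j - x i)"
  proof -
    have "{i<..<Suc n} = Suc ` {i'. i < Suc i' \<and> i' < n}" for i
      by (auto simp: image_iff less_Suc_eq_0_disj)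
    then have shift: "(\<Prod>j\<in>{i<..<Suc n}. f j) = (\<Prod>j\<in>{i'. i < Suc i' \<and> i' < n}. f (Suc j))"
      for i and f :: "nat \<Rightarrow> 'a"
      by (simp add: prod.reindex)
    have "{i'. 0 < Suc i' \<and> i' < n} = {..<n}" "{i'. Suc i < Suc i' \<and> i' < n} = {i<..<n}" for i
      by auto
    then show ?thesis
      by (simp add: prod.lessThan_Suc_shift shift del: prod.lessThan_Suc)
  qed
  finally show ?case .
qed

lemma det_poly_cols:
  fixes Q :: "nat \<Rightarrow> 'a :: comm_ring_1 poly"
  assumes deg: "\<And>i. i < n \<Longrightarrow> degree (Q i) < n"
  shows "det (mat n n (\<lambda>(j, i). poly (Q i) (x j))) =
    det (mat n n (\<lambda>(d, i). coeff (Q i) d)) * det (mat n n (\<lambda>(j, i). x j ^ i))"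
proof -
  let ?V = "mat n n (\<lambda>(j, i). x j ^ i)"
  let ?C = "mat n n (\<lambda>(d, i). coeff (Q i) d)"
  have "poly (Q i) y = (\<Sum>d<n. y ^ d * coeff (Q i) d)" if "i < n" for i y
  proof -
    have "(\<Sum>d<n. y ^ d * coeff (Q i) d) = (\<Sum>d\<le>degree (Q i). y ^ d * coeff (Q i) d)"
      by (rule sum.mono_neutral_right) (use deg[OF that] in \<open>auto simp: coeff_eq_0\<close>)
    then show ?thesis
      by (simp add: poly_altdef mult.commute)
  qed
  then have "mat n n (\<lambda>(j, i). poly (Q i) (x j)) = ?V * ?C"
    by (intro eq_matI) (simp_all add: scalar_prod_def lessThan_atLeast0)
  then show ?thesis
    by (simp add: det_mult[of ?V n ?C] mult.commute)
qed

section \<open>The branching determinant\<close>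

lemma sum_int_telescope:
  fixes f :: "int \<Rightarrow> 'a :: ab_group_add"
  assumes "a \<le> b + 1"
  shows "(\<Sum>x\<in>{a..b}. f x - f (x - 1)) = f b - f (a - 1)"
proof -
  have "a - 1 \<le> b" using assms by simp
  then show ?thesis
  proof (induction b rule: int_ge_induct)
    case base
    then show ?case by simp
  next
    case (step b)
    then have "{a..b + 1} = insert (b + 1) {a..b}"
      by auto
    then show ?case
      using step by simp
  qed
qed

lemma notin_Ints_add:
  fixes z :: "'a :: ring_1"
  assumes "z \<notin> \<int>" and "w \<in> \<int>"
  shows "z + w \<notin> \<int>"
  using assms by (metis Ints_diff add_diff_cancel_right')

lemma pochhammer_nonzero_if_notin_Ints:
  fixes w :: "'a :: field_char_0"
  assumes "w \<notin> \<int>"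
  shows "pochhammer w n \<noteq> 0"
  using assms by (auto simp: pochhammer_eq_0_iff)

definition recip_pochhammer :: "nat \<Rightarrow> 'a :: field_char_0 \<Rightarrow> 'a" where
  "recip_pochhammer r w = fact r / pochhammer w (Suc r)"

lemma recip_pochhammer_diff:
  fixes w :: "'a :: field_char_0"
  assumes w: "w \<notin> \<int>"
  shows "recip_pochhammer r w - recip_pochhammer r (w + 1) = recip_pochhammer (Suc r) w"
proof -
  have w1: "w + 1 \<notin> \<int>"
    using notin_Ints_add[OF w Ints_1] .
  define P where "P = pochhammer (w + 1) r"
  define d where "d = w + 1 + of_nat r"
  have nz: "w \<noteq> 0" "P \<noteq> 0"
    using w pochhammer_nonzero_if_notin_Ints[OF w1, of r] by (auto simp: P_def)
  have "d \<noteq> 0"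
  proof
    assume "d = 0"
    then have "w = - of_nat (Suc r)"
      by (simp add: d_def algebra_simps add_eq_0_iff2)
    then show False
      using w by simp
  qed
  have P_Suc: "pochhammer (w + 1) (Suc r) = P * d"
    by (simp add: P_def d_def pochhammer_Suc)
  have "recip_pochhammer r w - recip_pochhammer r (w + 1) = fact r / (w * P) - fact r / (P * d)"
    by (simp only: recip_pochhammer_def P_Suc pochhammer_rec[of w r] P_def)
  also have "\<dots> = fact (Suc r) / (w * (P * d))"
    using nz \<open>d \<noteq> 0\<close> by (simp add: field_simps) (simp add: d_def algebra_simps)
  also have "\<dots> = recip_pochhammer (Suc r) w"
    by (simp only: recip_pochhammer_def pochhammer_rec[of w "Suc r"] P_Suc)
  finally show ?thesis .
qed

text \<open>
  Row \<open>j\<close> of \<open>gt_matrix z r nu\<close> is evaluated at \<open>nu ! j - j - 1\<close>, which is the paper's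
  l_j = nu_j - j in 1-based indexing.
\<close>

definition gt_entry :: "'a :: field_char_0 \<Rightarrow> nat \<Rightarrow> nat \<Rightarrow> 'a \<Rightarrow> nat \<Rightarrow> 'a" where
  "gt_entry z r M x i = (if Suc i < M then (x + of_nat i) gchoose i else recip_pochhammer r (z - x))"

definition gt_matrix :: "'a :: field_char_0 \<Rightarrow> nat \<Rightarrow> int list \<Rightarrow> 'a mat" where
  "gt_matrix z r nu = mat (length nu) (length nu)
     (\<lambda>(j, i). gt_entry z r (length nu) (of_int (nu ! j - int j - 1)) i)"

lemma gt_entry_diff:
  fixes z :: "'a :: field_char_0"
  assumes z: "z \<notin> \<int>"
  shows "gt_entry z r (Suc m) (of_int y) (Suc i) - gt_entry z r (Suc m) (of_int (y - 1)) (Suc i) =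
    gt_entry z (Suc r) m (of_int y) i"
proof (cases "Suc i < m")
  case True
  have "((of_int y + of_nat i + 1) gchoose (Suc i)) - ((of_int y + of_nat i) gchoose (Suc i)) =
      ((of_int y :: 'a) + of_nat i) gchoose i"
    by (simp add: gbinomial_Suc_Suc)
  then show ?thesis
    using True by (simp add: gt_entry_def algebra_simps)
next
  case False
  have "z - of_int y \<notin> \<int>"
    using notin_Ints_add[OF z, of "of_int (- y)"] by simp
  then have "recip_pochhammer r (z - of_int y) - recip_pochhammer r (z - of_int y + 1) =
      recip_pochhammer (Suc r) (z - of_int y)"
    by (rule recip_pochhammer_diff)
  then show ?thesis
    using False by (simp add: gt_entry_def algebra_simps)
qed

lemma sum_interlaced_det_gt_matrix:
  fixes z :: "'a :: field_char_0"
  assumes z: "z \<notin> \<int>" and m: "m \<ge> 1" and nu: "nu \<in> sig (Suc m)"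
  shows "(\<Sum>lam | interlaced lam nu. det (gt_matrix z (Suc r) lam)) = (-1) ^ m * det (gt_matrix z r nu)"
proof -
  have len: "length nu = Suc m"
    using nu by (simp add: sig_def)
  define e where "e j x i = gt_entry z (Suc r) m (of_int (x - int j - 1)) i" for j x i
  define C where "C = gt_matrix z r nu"
  have C: "C \<in> carrier_mat (Suc m) (Suc m)"
    by (simp add: C_def gt_matrix_def len)
  have C_index: "C $$ (j, i) = gt_entry z r (Suc m) (of_int (nu ! j - int j - 1)) i"
    if "j < Suc m" "i < Suc m" for j i
    using that by (simp add: C_def gt_matrix_def len)
  have "(\<Sum>lam | interlaced lam nu. det (gt_matrix z (Suc r) lam)) =
      (\<Sum>lam | interlaced lam nu. det (mat m m (\<lambda>(j, i). e j (restrict ((!) lam) {..<m} j) i)))"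
  proof (intro sum.cong refl)
    fix lam assume "lam \<in> {lam. interlaced lam nu}"
    then have "length lam = m"
      using len by (simp add: interlaced_def)
    then show "det (gt_matrix z (Suc r) lam) = det (mat m m (\<lambda>(j, i). e j (restrict ((!) lam) {..<m} j) i))"
      unfolding gt_matrix_def by (intro arg_cong[where f = det] cong_mat) (simp_all add: e_def)
  qed
  also have "\<dots> = (\<Sum>g \<in> PiE {..<m} (\<lambda>j. {nu ! Suc j..nu ! j}). det (mat m m (\<lambda>(j, i). e j (g j) i)))"
    by (rule sum.reindex_bij_betw[OF interlaced_bij_PiE[OF len]])
  also have "\<dots> = det (mat m m (\<lambda>(j, i). \<Sum>x\<in>{nu ! Suc j..nu ! j}. e j x i))"
    by (rule det_sum_rows[symmetric]) simp
  also have "mat m m (\<lambda>(j, i). \<Sum>x\<in>{nu ! Suc j..nu ! j}. e j x i) =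
      mat m m (\<lambda>(j, i). C $$ (j, Suc i) - C $$ (Suc j, Suc i))"
  proof (rule cong_mat)
    fix j i assume j: "j < m" and i: "i < m"
    define F where "F x = gt_entry z r (Suc m) (of_int (x - int j - 1)) (Suc i)" for x
    have "e j x i = F x - F (x - 1)" for x
      using gt_entry_diff[OF z, of r m "x - int j - 1" i] by (simp add: e_def F_def algebra_simps)
    moreover have "nu ! Suc j \<le> nu ! j + 1"
      using sig_nth_Suc_le[OF nu, of j] j by simp
    ultimately have "(\<Sum>x\<in>{nu ! Suc j..nu ! j}. e j x i) = F (nu ! j) - F (nu ! Suc j - 1)"
      by (simp add: sum_int_telescope)
    also have "\<dots> = C $$ (j, Suc i) - C $$ (Suc j, Suc i)"
      using i j by (simp add: C_index F_def algebra_simps)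
    finally show "(\<lambda>(j, i). \<Sum>x\<in>{nu ! Suc j..nu ! j}. e j x i) (j, i) =
        (\<lambda>(j, i). C $$ (j, Suc i) - C $$ (Suc j, Suc i)) (j, i)"
      by simp
  qed simp_all
  also have "det \<dots> = (-1) ^ m * det C"
  proof -
    have "C $$ (j, 0) = 1" if "j < Suc m" for j
      using that m by (simp add: C_index gt_entry_def)
    then have "det C = (-1) ^ m * det (mat m m (\<lambda>(j, i). C $$ (j, Suc i) - C $$ (Suc j, Suc i)))"
      by (rule det_first_col_ones[OF C])
    then show ?thesis
      by (simp flip: power_add mult_2)
  qed
  finally show ?thesis
    by (simp add: C_def)
qed

lemma sum_DimKN_recip_pochhammer:
  fixes z :: "'a :: field_char_0"
  assumes z: "z \<notin> \<int>" and "M \<ge> 1" and "nu \<in> sig M" and "a \<le> nu ! (M - 1)" and "nu ! 0 \<le> b"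
  shows "(\<Sum>k\<in>{a..b}. of_nat (DimKN 1 M [k] nu) * recip_pochhammer (r + M - 1) (z - of_int (k - 1))) =
    (\<Prod>m<M. (-1) ^ m) * det (gt_matrix z r nu)"
  using assms(2-)
proof (induction M arbitrary: nu r rule: nat_induct_at_least)
  case base
  then obtain c where nu: "nu = [c]"
    by (auto simp: sig_def length_Suc_conv)
  then have c: "c \<in> {a..b}"
    using base by simp
  have "of_nat (DimKN 1 1 [k] nu) * recip_pochhammer (r + 1 - 1) (z - of_int (k - 1)) =
      (if k = c then recip_pochhammer r (z - of_int (c - 1)) else (0 :: 'a))" for k
    using DimKN_1[of k nu] by (simp add: nu)
  then have "(\<Sum>k\<in>{a..b}. of_nat (DimKN 1 1 [k] nu) * recip_pochhammer (r + 1 - 1) (z - of_int (k - 1))) =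
      recip_pochhammer r (z - of_int (c - 1))"
    using c by (simp add: sum.delta')
  moreover have "det (gt_matrix z r nu) = recip_pochhammer r (z - of_int (c - 1))"
    by (subst det_single) (simp_all add: gt_matrix_def gt_entry_def nu)
  ultimately show ?case
    by simp
next
  case (Suc n)
  have IH: "(\<Sum>k\<in>{a..b}. of_nat (DimKN 1 n [k] lam) * recip_pochhammer (Suc r + n - 1) (z - of_int (k - 1))) =
      (\<Prod>m<n. (-1) ^ m) * det (gt_matrix z (Suc r) lam)" if "interlaced lam nu" for lam
  proof (rule Suc.IH)
    have "length nu = Suc n"
      using Suc.prems(1) by (simp add: sig_def)
    from interlaced_bounds[OF that this Suc.hyps] Suc.prems show "a \<le> lam ! (n - 1)" "lam ! 0 \<le> b"
      by simp_all
  qed (rule sig_if_interlaced[OF Suc.prems(1) that])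
  have "(\<Sum>k\<in>{a..b}. of_nat (DimKN 1 (Suc n) [k] nu) * recip_pochhammer (r + Suc n - 1) (z - of_int (k - 1))) =
      (\<Sum>k\<in>{a..b}. \<Sum>lam | interlaced lam nu.
         of_nat (DimKN 1 n [k] lam) * recip_pochhammer (Suc r + n - 1) (z - of_int (k - 1)))"
    using DimKN_branching[OF Suc.hyps Suc.prems(1)] Suc.hyps by (simp add: sum_distrib_right)
  also have "\<dots> = (\<Sum>lam | interlaced lam nu. \<Sum>k\<in>{a..b}.
         of_nat (DimKN 1 n [k] lam) * recip_pochhammer (Suc r + n - 1) (z - of_int (k - 1)))"
    by (rule sum.swap)
  also have "\<dots> = (\<Sum>lam | interlaced lam nu. (\<Prod>m<n. (-1) ^ m) * det (gt_matrix z (Suc r) lam))"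
    by (intro sum.cong refl IH) simp
  also have "\<dots> = (\<Prod>m<n. (-1) ^ m) * (-1) ^ n * det (gt_matrix z r nu)"
    by (simp add: sum_distrib_left[symmetric] sum_interlaced_det_gt_matrix[OF z Suc.hyps Suc.prems(1)])
  finally show ?case
    by simp
qed

definition binomial_poly :: "nat \<Rightarrow> 'a :: field_char_0 poly" where
  "binomial_poly i = Polynomial.smult (inverse (fact i)) (pochhammer [:1, 1:] i)"

lemma poly_pochhammer: "poly (pochhammer p n) x = pochhammer (poly p x) n"
  by (induction n) (simp_all add: pochhammer_Suc)

lemma poly_binomial_poly: "poly (binomial_poly i) x = (x + of_nat i) gchoose i"
  by (simp add: binomial_poly_def poly_pochhammer gbinomial_pochhammer' divide_inverse mult.commute add.commute)

lemma degree_binomial_poly: "degree (binomial_poly i) \<le> i"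
proof -
  have "degree (pochhammer [:1, 1:] n :: 'a poly) \<le> n" for n
  proof (induction n)
    case (Suc n)
    have "degree (pochhammer [:1, 1:] n * ([:1, 1:] + of_nat n) :: 'a poly) \<le> n + 1"
      using Suc by (intro order.trans[OF degree_mult_le]) (simp add: of_nat_poly)
    then show ?case
      by (simp add: pochhammer_Suc)
  qed simp
  then show ?thesis
    unfolding binomial_poly_def by (meson degree_smult_le order.trans)
qed

lemma det_gt_entry_0_proportional_vandermonde:
  fixes z :: "'a :: field_char_0"
  shows "\<exists>c. \<forall>x. (\<forall>j<N. x j \<noteq> z) \<longrightarrow>
    det (mat N N (\<lambda>(j, i). gt_entry z 0 N (x j) i)) * (\<Prod>j<N. z - x j) =
      c * (\<Prod>i<N. \<Prod>j\<in>{i<..<N}. x j - x i)"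
proof -
  define Q where "Q i = (if Suc i < N then [:z, -1:] * binomial_poly i else 1)" for i
  have deg: "degree (Q i) < N" if "i < N" for i
  proof (cases "Suc i < N")
    case True
    have "degree ([:z, -1:] * binomial_poly i) \<le> 1 + i"
      using degree_binomial_poly[of i] by (intro order.trans[OF degree_mult_le]) simp
    then show ?thesis
      using True by (simp add: Q_def)
  qed (use that in \<open>simp add: Q_def\<close>)
  have "det (mat N N (\<lambda>(j, i). gt_entry z 0 N (x j) i)) * (\<Prod>j<N. z - x j) =
      det (mat N N (\<lambda>(d, i). coeff (Q i) d)) * (\<Prod>i<N. \<Prod>j\<in>{i<..<N}. x j - x i)"
    if x: "\<forall>j<N. x j \<noteq> z" for x
  proof -
    have "det (mat N N (\<lambda>(j, i). gt_entry z 0 N (x j) i)) =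
        det (mat N N (\<lambda>(j, i). inverse (z - x j) * poly (Q i) (x j)))"
      using x by (intro arg_cong[where f = det] cong_mat)
        (auto simp: gt_entry_def Q_def recip_pochhammer_def poly_binomial_poly field_simps)
    also have "\<dots> = (\<Prod>j<N. inverse (z - x j)) * det (mat N N (\<lambda>(j, i). poly (Q i) (x j)))"
      by (rule det_scale_rows)
    also have "det (mat N N (\<lambda>(j, i). poly (Q i) (x j))) =
        det (mat N N (\<lambda>(d, i). coeff (Q i) d)) * (\<Prod>i<N. \<Prod>j\<in>{i<..<N}. x j - x i)"
      by (simp add: det_poly_cols[OF deg] det_vandermonde)
    finally have "det (mat N N (\<lambda>(j, i). gt_entry z 0 N (x j) i)) * (\<Prod>j<N. z - x j) =
        ((\<Prod>j<N. inverse (z - x j)) * (\<Prod>j<N. z - x j)) *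
        (det (mat N N (\<lambda>(d, i). coeff (Q i) d)) * (\<Prod>i<N. \<Prod>j\<in>{i<..<N}. x j - x i))"
      by (simp only: mult_ac)
    moreover have "(\<Prod>j<N. inverse (z - x j)) * (\<Prod>j<N. z - x j) = (\<Prod>j<N. 1)"
      unfolding prod.distrib[symmetric] by (rule prod.cong) (use x in auto)
    ultimately show ?thesis
      by simp
  qed
  then show ?thesis
    by blast
qed

section \<open>Rational functions of \<open>t\<close>\<close>

instance fract :: ("{idom, ring_char_0}") ring_char_0
  by standard (auto intro!: injI simp: of_nat_fract eq_fract)

lemma to_fract_of_int: "to_fract (of_int n) = of_int n"
  by (induction n rule: int_induct[where k = 0]) simp_all

lemma to_fract_const: "to_fract [:q:] = (of_rat q :: rat poly fract)"
proof -
  obtain a b where "quotient_of q = (a, b)"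
    by force
  then have q: "q = of_int a / of_int b" and b: "b \<noteq> 0"
    using quotient_of_div quotient_of_denom_pos by fastforce+
  have "[:q:] * of_int b = of_int a"
    using b by (simp add: q of_int_poly)
  then have "to_fract [:q:] * of_int b = of_int a"
    by (metis to_fract_mult to_fract_of_int)
  then show ?thesis
    using b by (simp add: q of_rat_divide eq_divide_eq)
qed

definition indet :: "rat poly fract" where
  "indet = to_fract [:0, 1:]"

lemma to_fract_linear: "to_fract [:c, 1:] = indet + of_rat c"
proof -
  have "to_fract [:c, 1:] = to_fract ([:0, 1:] + [:c:])"
    by simp
  also have "\<dots> = indet + of_rat c"
    by (simp only: to_fract_add indet_def to_fract_const)
  finally show ?thesis .
qed

lemma indet_notin_Ints: "indet \<notin> \<int>"
proof
  assume "indet \<in> \<int>"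
  then obtain n where "indet = of_int n"
    by (auto elim: Ints_cases)
  then have "to_fract [:0, 1:] = to_fract (of_int n :: rat poly)"
    by (simp add: indet_def to_fract_of_int)
  then show False
    by (simp add: of_int_poly)
qed

lemma to_fract_prod: "to_fract (prod f A) = (\<Prod>x\<in>A. to_fract (f x))"
  by (induction A rule: infinite_finite_induct) simp_all

lemma pochhammer_eq_prod_atLeast1_atMost:
  "pochhammer (a + 1) N = (\<Prod>j\<in>{1..N}. a + of_nat j)"
  by (simp add: pochhammer_prod prod.atLeast1_atMost_eq atLeast0LessThan algebra_simps)

lemma Hstar_eq:
  "Hstar N nu = pochhammer (indet + 1) N / (\<Prod>j<N. indet - of_int (nu ! j - int j - 1))"
proof -
  have "Hstar N nu = (\<Prod>j\<in>{1..N}. (indet + of_nat j) / (indet + of_nat j - of_int (nu ! (j - 1))))"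
    unfolding Hstar_def
    by (intro prod.cong refl) (simp add: Fract_conv_to_fract to_fract_linear of_rat_diff algebra_simps)
  also have "\<dots> = pochhammer (indet + 1) N / (\<Prod>j<N. indet - of_int (nu ! j - int j - 1))"
    unfolding pochhammer_eq_prod_atLeast1_atMost
    by (simp add: prod_dividef prod.atLeast1_atMost_eq algebra_simps)
  finally show ?thesis .
qed

lemma shift_ratio_eq:
  "shift_ratio N k = pochhammer (indet + 1) N / pochhammer (indet + 1 - of_int k) N"
proof -
  have "pochhammer (indet + 1 - of_int k) N = pochhammer ((indet - of_int k) + 1) N"
    by (simp add: algebra_simps)
  then show ?thesis
    unfolding pochhammer_eq_prod_atLeast1_atMost
    by (simp add: shift_ratio_def Fract_conv_to_fract to_fract_prod to_fract_linear of_rat_diff algebra_simps)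
qed

section \<open>Weyl's dimension and the main theorem\<close>

lemma sig_antimono:
  assumes nu: "nu \<in> sig N" and "i \<le> j" and "j < N"
  shows "nu ! j \<le> nu ! i"
  using assms(2,3)
proof (induction j rule: dec_induct)
  case (step n)
  then show ?case
    using sig_nth_Suc_le[OF nu, of n] by simp
qed simp

lemma DimW_nested:
  "DimW N nu = (\<Prod>i<N. \<Prod>j\<in>{i<..<N}. of_int (nu ! i - nu ! j - int i + int j) / of_int (int j - int i))"
proof -
  have "{(i, j). i < j \<and> j < N} = Sigma {..<N} (\<lambda>i. {i<..<N})"
    by auto
  then show ?thesis
    unfolding DimW_def by (simp add: prod.Sigma)
qed

lemma DimW_pos:
  assumes "nu \<in> sig N"
  shows "DimW N nu > 0"
  unfolding DimW_nested
proof (intro prod_pos ballI)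
  fix i j assume "i \<in> {..<N}" and j: "j \<in> {i<..<N}"
  then have "nu ! j \<le> nu ! i"
    using sig_antimono[OF assms, of i j] by simp
  then show "0 < (of_int (nu ! i - nu ! j - int i + int j) / of_int (int j - int i) :: rat)"
    using j by simp
qed

lemma DimW_replicate_0: "DimW N (replicate N 0) = 1"
  unfolding DimW_nested by (intro prod.neutral ballI) simp

lemma of_rat_DimW:
  "(of_rat (DimW N nu) :: 'a :: field_char_0) * (\<Prod>i<N. \<Prod>j\<in>{i<..<N}. of_nat i - of_nat j) =
    (\<Prod>i<N. \<Prod>j\<in>{i<..<N}. of_int (nu ! j - int j - 1) - of_int (nu ! i - int i - 1))"
proof -
  have "(of_rat (DimW N nu) :: 'a) * (\<Prod>i<N. \<Prod>j\<in>{i<..<N}. of_nat i - of_nat j) =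
      (\<Prod>i<N. \<Prod>j\<in>{i<..<N}.
         of_int (nu ! i - nu ! j - int i + int j) / of_int (int j - int i) * (of_nat i - of_nat j))"
    unfolding DimW_nested by (simp add: of_rat_prod of_rat_divide of_rat_add of_rat_diff flip: prod.distrib)
  also have "\<dots> = (\<Prod>i<N. \<Prod>j\<in>{i<..<N}. of_int (nu ! j - int j - 1) - of_int (nu ! i - int i - 1))"
    by (intro prod.cong refl) (simp add: field_simps)
  finally show ?thesis .
qed

lemma det_gt_matrix_0_proportional_DimW:
  fixes z :: "'a :: field_char_0"
  assumes z: "z \<notin> \<int>"
  shows "\<exists>c. \<forall>nu. length nu = N \<longrightarrow>
    det (gt_matrix z 0 nu) * (\<Prod>j<N. z - of_int (nu ! j - int j - 1)) = c * of_rat (DimW N nu)"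
proof -
  obtain c where c: "\<forall>x. (\<forall>j<N. x j \<noteq> z) \<longrightarrow>
      det (mat N N (\<lambda>(j, i). gt_entry z 0 N (x j) i)) * (\<Prod>j<N. z - x j) =
        c * (\<Prod>i<N. \<Prod>j\<in>{i<..<N}. x j - x i)"
    using det_gt_entry_0_proportional_vandermonde by blast
  have "det (gt_matrix z 0 nu) * (\<Prod>j<N. z - of_int (nu ! j - int j - 1)) =
      c * (\<Prod>i<N. \<Prod>j\<in>{i<..<N}. of_nat i - of_nat j) * of_rat (DimW N nu)"
    if "length nu = N" for nu
  proof -
    have "\<forall>j<N. of_int (nu ! j - int j - 1) \<noteq> z"
      using z by (metis Ints_of_int)
    then show ?thesis
      using c that by (simp add: gt_matrix_def of_rat_DimW mult_ac)
  qed
  then show ?thesis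
    by blast
qed

lemma recip_pochhammer_eq_shift_ratio:
  assumes "N \<ge> 1"
  shows "recip_pochhammer (N - 1) (indet - of_int (k - 1)) =
    fact (N - 1) / pochhammer (indet + 1) N * shift_ratio N k"
proof -
  have "pochhammer (indet + 1) N \<noteq> 0"
    by (rule pochhammer_nonzero_if_notin_Ints[OF notin_Ints_add[OF indet_notin_Ints Ints_1]])
  moreover have shift: "indet - of_int (k - 1) = indet + 1 - of_int k"
    by simp
  ultimately show ?thesis
    unfolding recip_pochhammer_def shift using assms by (simp add: shift_ratio_eq)
qed

lemma sum_DimKN_shift_ratio_proportional:
  assumes N: "N \<ge> 1"
  shows "\<exists>\<kappa>. \<forall>nu\<in>sig N.
    (\<Sum>k\<in>{nu ! (N - 1)..nu ! 0}. of_nat (DimKN 1 N [k] nu) * shift_ratio N k) =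
      \<kappa> * of_rat (DimW N nu) * Hstar N nu"
proof -
  obtain c where c: "\<forall>nu. length nu = N \<longrightarrow>
      det (gt_matrix indet 0 nu) * (\<Prod>j<N. indet - of_int (nu ! j - int j - 1)) = c * of_rat (DimW N nu)"
    using det_gt_matrix_0_proportional_DimW[OF indet_notin_Ints] by blast
  define s where "s = (\<Prod>m<N. (-1) ^ m :: rat poly fract)"
  define f where "f = (fact (N - 1) :: rat poly fract)"
  define P where "P = pochhammer (indet + 1) N"
  have "P \<noteq> 0"
    unfolding P_def by (rule pochhammer_nonzero_if_notin_Ints[OF notin_Ints_add[OF indet_notin_Ints Ints_1]])
  have "(\<Sum>k\<in>{nu ! (N - 1)..nu ! 0}. of_nat (DimKN 1 N [k] nu) * shift_ratio N k) =
      s * c / f * of_rat (DimW N nu) * Hstar N nu" if nu: "nu \<in> sig N" for nu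
  proof -
    define S where "S = (\<Sum>k\<in>{nu ! (N - 1)..nu ! 0}. of_nat (DimKN 1 N [k] nu) * shift_ratio N k)"
    define D where "D = (\<Prod>j<N. indet - of_int (nu ! j - int j - 1) :: rat poly fract)"
    have "\<forall>j. indet \<noteq> of_int (nu ! j - int j - 1)"
      using indet_notin_Ints by (metis Ints_of_int)
    then have "D \<noteq> 0"
      by (auto simp: D_def)
    have "(\<Sum>k\<in>{nu ! (N - 1)..nu ! 0}.
        of_nat (DimKN 1 N [k] nu) * recip_pochhammer (N - 1) (indet - of_int (k - 1))) = f / P * S"
      unfolding recip_pochhammer_eq_shift_ratio[OF N] by (simp add: S_def f_def P_def sum_distrib_left mult_ac)
    then have S: "f / P * S = s * det (gt_matrix indet 0 nu)"
      using sum_DimKN_recip_pochhammer[OF indet_notin_Ints N nu order_refl order_refl, of 0]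
      by (simp add: s_def)
    have "det (gt_matrix indet 0 nu) * D = c * of_rat (DimW N nu)"
      using c nu by (simp add: D_def sig_def)
    then have det: "det (gt_matrix indet 0 nu) = c * of_rat (DimW N nu) / D"
      using \<open>D \<noteq> 0\<close> by (simp add: eq_divide_eq)
    have "f \<noteq> 0"
      by (simp add: f_def)
    then have "S = P / f * (f / P * S)"
      using \<open>P \<noteq> 0\<close> by simp
    also have "\<dots> = P / f * (s * (c * of_rat (DimW N nu) / D))"
      by (simp only: S det)
    also have "\<dots> = s * c / f * of_rat (DimW N nu) * (P / D)"
      using \<open>f \<noteq> 0\<close> \<open>D \<noteq> 0\<close> by (simp add: field_simps)
    also have "P / D = Hstar N nu"
      by (simp add: Hstar_eq P_def D_def)
    finally show ?thesis
      unfolding S_def .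
  qed
  then show ?thesis
    by blast
qed

lemma sum_DimKN_shift_ratio:
  assumes "N \<ge> 1" and "nu \<in> sig N"
  shows "(\<Sum>k\<in>{nu ! (N - 1)..nu ! 0}. of_nat (DimKN 1 N [k] nu) * shift_ratio N k) =
    of_rat (DimW N nu) * Hstar N nu"
proof -
  obtain \<kappa> where \<kappa>: "\<forall>nu\<in>sig N.
      (\<Sum>k\<in>{nu ! (N - 1)..nu ! 0}. of_nat (DimKN 1 N [k] nu) * shift_ratio N k) =
        \<kappa> * of_rat (DimW N nu) * Hstar N nu"
    using sum_DimKN_shift_ratio_proportional[OF assms(1)] by blast
  let ?z = "replicate N (0 :: int)"
  have z: "?z \<in> sig N"
    by (simp add: sig_def)
  have "shift_ratio N 0 = 1"
    by (simp add: shift_ratio_def Fract_conv_to_fract)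
  then have "(\<Sum>k\<in>{?z ! (N - 1)..?z ! 0}. of_nat (DimKN 1 N [k] ?z) * shift_ratio N k) = 1"
    using assms(1) DimKN_replicate_0[OF assms(1)] by simp
  moreover have "Hstar N ?z = 1"
    unfolding Hstar_def by (intro prod.neutral) (auto simp: Fract_conv_to_fract)
  ultimately have "\<kappa> = 1"
    using \<kappa>[rule_format, OF z] by (simp add: DimW_replicate_0)
  then show ?thesis
    using \<kappa> assms(2) by simp
qed

theorem theorem3:
  fixes N :: nat and nu :: "int list"
  assumes "N \<ge> 1" and "nu \<in> sig N"
  shows "(\<forall>k. \<not> (nu ! (N - 1) \<le> k \<and> k \<le> nu ! 0) \<longrightarrow> Fk N nu k = 0) \<and>
         Hstar N nu = (\<Sum>k\<in>{nu ! (N - 1)..nu ! 0}. Fract [:Fk N nu k:] 1 * shift_ratio N k)"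
proof
  show "\<forall>k. \<not> (nu ! (N - 1) \<le> k \<and> k \<le> nu ! 0) \<longrightarrow> Fk N nu k = 0"
    using DimKN_support[OF assms] by (auto simp: Fk_def)
next
  have "Fract [:Fk N nu k:] 1 = of_nat (DimKN 1 N [k] nu) / of_rat (DimW N nu)" for k
    by (simp add: Fk_def to_fract_def[symmetric] to_fract_const of_rat_divide)
  then have "(\<Sum>k\<in>{nu ! (N - 1)..nu ! 0}. Fract [:Fk N nu k:] 1 * shift_ratio N k) =
      (\<Sum>k\<in>{nu ! (N - 1)..nu ! 0}. of_nat (DimKN 1 N [k] nu) * shift_ratio N k) / of_rat (DimW N nu)"
    by (simp add: sum_divide_distrib)
  also have "\<dots> = Hstar N nu"
    using sum_DimKN_shift_ratio[OF assms] DimW_pos[OF assms(2)] by simp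
  finally show "Hstar N nu = (\<Sum>k\<in>{nu ! (N - 1)..nu ! 0}. Fract [:Fk N nu k:] 1 * shift_ratio N k)"
    by simp
qed

end
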